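(* Let $\mathbb{X}=\ell_\infty^3$ and let $\mathbb{Y}$ be a two-dimensional strictly convex, smooth Banach space. Let $x_1=(1,1,1)$, $x_2=(-1,1,1)$, $x_3=(-1,-1,1)$, $x_4=(1,-1,1)$. Let $T\in\mathbb{L}(\mathbb{X},\mathbb{Y})$ with $\|T\|=1$ and $M_T\cap\operatorname{Ext}(B_{\mathbb{X}})=\{\pm x_1,\pm x_2,\pm x_3,\pm x_4\}$. Then: (i) if $\operatorname{Rank}(T)=1$, then $T$ is $3$-smooth; (ii) if $\operatorname{Rank}(T)=2$, then $T$ is $4$-smooth.
   Context: $\mathbb{L}(\mathbb{X},\mathbb{Y})$ is the space of linear operators with the operator norm. $B_{\mathbb{X}}$ is the closed unit ball, $\operatorname{Ext}$ its set of extreme points, $M_T=\{x\in\mathbb{X}:\|x\|=1,\ \|Tx\|=\|T\|\}$. A Banach space is strictly convex if its unit sphere contains no nontrivial line segment, and smooth if every unit vector has a unique norm-one supporting functional. For a Banach space $\mathbb{Z}$ and a unit vector $z$, $J(z)=\{f\in \mathbb{Z}^*:\|f\|=1,\ f(z)=1\}$; $z$ is $k$-smooth if $\dim\operatorname{span} J(z)=k$ ($T$ considered in the unit sphere of $\mathbb{L}(\mathbb{X},\mathbb{Y})$). *)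

theory Defs
  imports "HOL-Analysis.Analysis"
begin

datatype linf3 = L3 real real real

fun c1 :: "linf3 \<Rightarrow> real" where "c1 (L3 a b c) = a"
fun c2 :: "linf3 \<Rightarrow> real" where "c2 (L3 a b c) = b"
fun c3 :: "linf3 \<Rightarrow> real" where "c3 (L3 a b c) = c"

lemma linf3_eq_iff: "x = y \<longleftrightarrow> c1 x = c1 y \<and> c2 x = c2 y \<and> c3 x = c3 y"
  by (cases x; cases y) auto

instantiation linf3 :: real_normed_vector
begin

definition "0 = L3 0 0 0"
definition "x + y = L3 (c1 x + c1 y) (c2 x + c2 y) (c3 x + c3 y)"
definition "x - y = L3 (c1 x - c1 y) (c2 x - c2 y) (c3 x - c3 y)"
definition "- x = L3 (- c1 x) (- c2 x) (- c3 x)"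
definition "scaleR r x = L3 (r * c1 x) (r * c2 x) (r * c3 x)"
definition norm_linf3_def: "norm x = max \<bar>c1 x\<bar> (max \<bar>c2 x\<bar> \<bar>c3 x\<bar>)"
definition "sgn (x::linf3) = scaleR (inverse (norm x)) x"
definition "dist (x::linf3) y = norm (x - y)"
definition "uniformity = (INF e\<in>{0 <..}. principal {(x::linf3, y). dist x y < e})"
definition "open (U::linf3 set) \<longleftrightarrow>
   (\<forall>x\<in>U. \<forall>\<^sub>F (x', y) in uniformity. x' = x \<longrightarrow> y \<in> U)"

lemma linf3_sel[simp]:
  "c1 0 = 0" "c2 0 = 0" "c3 0 = 0"
  "c1 (x + y) = c1 x + c1 y" "c2 (x + y) = c2 x + c2 y" "c3 (x + y) = c3 x + c3 y"
  "c1 (x - y) = c1 x - c1 y" "c2 (x - y) = c2 x - c2 y" "c3 (x - y) = c3 x - c3 y"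
  "c1 (- x) = - c1 x" "c2 (- x) = - c2 x" "c3 (- x) = - c3 x"
  "c1 (scaleR r x) = r * c1 x" "c2 (scaleR r x) = r * c2 x" "c3 (scaleR r x) = r * c3 x"
  by (simp_all add: zero_linf3_def plus_linf3_def minus_linf3_def uminus_linf3_def
      scaleR_linf3_def)

instance
proof
  fix x y z :: linf3 and a b :: real
  show "x + y + z = x + (y + z)" by (simp add: linf3_eq_iff)
  show "x + y = y + x" by (simp add: linf3_eq_iff)
  show "0 + x = x" by (simp add: linf3_eq_iff)
  show "- x + x = 0" by (simp add: linf3_eq_iff)
  show "x - y = x + - y" by (simp add: linf3_eq_iff)
  show "a *\<^sub>R (x + y) = a *\<^sub>R x + a *\<^sub>R y" by (simp add: linf3_eq_iff algebra_simps)
  show "(a + b) *\<^sub>R x = a *\<^sub>R x + b *\<^sub>R x" by (simp add: linf3_eq_iff algebra_simps)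
  show "a *\<^sub>R b *\<^sub>R x = (a * b) *\<^sub>R x" by (simp add: linf3_eq_iff)
  show "1 *\<^sub>R x = x" by (simp add: linf3_eq_iff)
  show "dist x y = norm (x - y)" by (simp add: dist_linf3_def)
  show "sgn x = inverse (norm x) *\<^sub>R x" by (simp add: sgn_linf3_def)
  show "norm x = 0 \<longleftrightarrow> x = 0"
    by (simp add: norm_linf3_def linf3_eq_iff max_def) auto
  show "norm (x + y) \<le> norm x + norm y"
  proof -
    have "\<bar>c1 x + c1 y\<bar> \<le> norm x + norm y" "\<bar>c2 x + c2 y\<bar> \<le> norm x + norm y"
      "\<bar>c3 x + c3 y\<bar> \<le> norm x + norm y"
      unfolding norm_linf3_def by (simp_all add: abs_triangle_ineq add_mono max.coboundedI1
          max.coboundedI2 order_trans[OF abs_triangle_ineq])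
    then show ?thesis by (simp add: norm_linf3_def)
  qed
  show "norm (a *\<^sub>R x) = \<bar>a\<bar> * norm x"
    by (simp add: norm_linf3_def abs_mult max_mult_distrib_left)
  show "uniformity = (INF e\<in>{0 <..}. principal {(x::linf3, y). dist x y < e})"
    by (simp add: uniformity_linf3_def)
  fix U :: "linf3 set"
  show "open U \<longleftrightarrow> (\<forall>x\<in>U. \<forall>\<^sub>F (x', y) in uniformity. x' = x \<longrightarrow> y \<in> U)"
    by (simp add: open_linf3_def)
qed

end

definition ball_X :: "linf3 set" where "ball_X = {x. norm x \<le> 1}"

definition Ext :: "'a::real_normed_vector set \<Rightarrow> 'a set" where
  "Ext B = {x. x extreme_point_of B}"

definition M :: "('a::real_normed_vector \<Rightarrow>\<^sub>L 'b::real_normed_vector) \<Rightarrow> 'a set" where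
  "M T = {x. norm x = 1 \<and> norm (blinfun_apply T x) = norm T}"

definition J :: "'a::real_normed_vector \<Rightarrow> ('a \<Rightarrow>\<^sub>L real) set" where
  "J z = {f. norm f = 1 \<and> blinfun_apply f z = 1}"

definition k_smooth :: "'a::real_normed_vector \<Rightarrow> nat \<Rightarrow> bool" where
  "k_smooth z k \<longleftrightarrow> norm z = 1 \<and> real_vector.dim (real_vector.span (J z)) = k"

definition strictly_convex_space :: "'a::real_normed_vector itself \<Rightarrow> bool" where
  "strictly_convex_space _ \<longleftrightarrow>
     \<not> (\<exists>x y :: 'a. x \<noteq> y \<and> closed_segment x y \<subseteq> sphere 0 1)"

definition smooth_space :: "'a::real_normed_vector itself \<Rightarrow> bool" where
  "smooth_space _ \<longleftrightarrow> (\<forall>z :: 'a. norm z = 1 \<longrightarrow> (\<exists>!f. f \<in> J z))"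

definition rank :: "('a::real_normed_vector \<Rightarrow>\<^sub>L 'b::real_normed_vector) \<Rightarrow> nat" where
  "rank T = real_vector.dim (range (blinfun_apply T))"

end

theory Submission
  imports Defs
begin

(* Write x_1, ..., x_4 for the vertices, y_i = T x_i (unit vectors, as x_i is in M_T) and g_i
   for the unique supporting functional at y_i. Each G_i = g_i (x) x_i, i.e. S |-> g_i (S x_i),
   lies in J(T). Conversely, if f is in J(T) and every G_i vanishes at S, then f(S) = 0:
   otherwise smoothness gives ||y_i + t S x_i|| < 1 + t f(S) for all four i and small t > 0, and
   since an operator on l_infinity^3 attains its norm at a vertex of the cube,
   ||T + t S|| < f(T + t S). Hence span J(T) = span {G_1, ..., G_4}.
   Evaluating sum_i c_i G_i = 0 at rank-one operators gives c_i g_i = (-1)^i phi for a single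
   phi. If all y_i are parallel (so rank T <= 1), then g_i = +-g_1 and x_4 = x_1 - x_2 + x_3
   make G_4 redundant, while G_1, G_2, G_3 stay independent. Otherwise (so rank T >= 2) strict
   convexity, under which a functional supports at most one unit vector, forces phi = 0, and
   all four G_i are independent. *)

lemma card_le_dim_if_independent:
  fixes A V :: "'a::real_vector set"
  assumes A: "independent A" "A \<subseteq> V" and V: "dim V \<noteq> 0"
  shows "finite A \<and> card A \<le> dim V"
proof -
  obtain B where B: "B \<subseteq> V" "independent B" "V \<subseteq> span B" "card B = dim V"
    by (rule real_vector.basis_exists)
  have "finite B"
    using B(4) V card.infinite by force
  moreover have "A \<subseteq> span B"
    using A(2) B(3) by blast
  ultimately show ?thesis
    using real_vector.independent_span_bound[of B A] A(1) B(4) by simp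
qed

lemma dim_span_image_eq_card:
  fixes G :: "'i \<Rightarrow> 'a::real_vector"
  assumes fin: "finite I"
    and indep: "\<And>lam. (\<Sum>i\<in>I. lam i *\<^sub>R G i) = 0 \<Longrightarrow> \<forall>i\<in>I. lam i = 0"
  shows "dim (span (G ` I)) = card I"
proof -
  have inj: "inj_on G I"
  proof (rule inj_onI, rule ccontr)
    fix i j assume ij: "i \<in> I" "j \<in> I" "G i = G j" "i \<noteq> j"
    define lam where "lam k = (if k = i then 1 else if k = j then -1 else 0 :: real)" for k
    have "(\<Sum>k\<in>I. lam k *\<^sub>R G k) = (\<Sum>k\<in>{i, j}. lam k *\<^sub>R G k)"
      using fin ij by (intro sum.mono_neutral_right) (auto simp: lam_def)
    also have "\<dots> = 0"
      using ij by (simp add: lam_def)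
    finally have "lam i = 0"
      using indep ij(1) by blast
    then show False
      by (simp add: lam_def)
  qed
  have "independent (G ` I)"
  proof (rule real_vector.independent_if_scalars_zero)
    show "finite (G ` I)"
      using fin by simp
    fix f v assume "(\<Sum>x\<in>G ` I. f x *\<^sub>R x) = 0" "v \<in> G ` I"
    then show "f v = 0"
      using indep[of "f \<circ> G"] by (auto simp: sum.reindex[OF inj])
  qed
  then show ?thesis
    by (simp add: real_vector.dim_eq_card_independent card_image[OF inj])
qed

lemma blinfun_in_span_if_kernels_subset:
  fixes f :: "'a::real_normed_vector \<Rightarrow>\<^sub>L real" and A :: "('a \<Rightarrow>\<^sub>L real) set"
  assumes "finite A" and "\<And>S. \<forall>G\<in>A. G S = 0 \<Longrightarrow> f S = 0"
  shows "f \<in> span A"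
  using assms
proof (induction A arbitrary: f rule: finite_induct)
  case empty
  then have "f = 0"
    by (intro blinfun_eqI) simp
  then show ?case
    by (simp add: real_vector.span_zero)
next
  case (insert G A)
  show ?case
  proof (cases "\<forall>S. (\<forall>G'\<in>A. G' S = 0) \<longrightarrow> G S = 0")
    case True
    then have "f \<in> span A"
      using insert.prems by (intro insert.IH) auto
    then show ?thesis
      using real_vector.span_mono[of A "insert G A"] by auto
  next
    case False
    then obtain S0 where S0: "\<forall>G'\<in>A. G' S0 = 0" "G S0 \<noteq> 0"
      by auto
    \<comment> \<open>Subtracting the right multiple of \<open>G\<close> reduces to the kernels of \<open>A\<close> alone.\<close>
    define f' where "f' = f - (f S0 / G S0) *\<^sub>R G"
    have "f' \<in> span A"
    proof (rule insert.IH)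
      fix S assume SA: "\<forall>G'\<in>A. G' S = 0"
      have "\<forall>G'\<in>insert G A. G' (S - (G S / G S0) *\<^sub>R S0) = 0"
        using SA S0 by (auto simp: blinfun.diff_right blinfun.scaleR_right)
      then have "f (S - (G S / G S0) *\<^sub>R S0) = 0"
        using insert.prems by blast
      then show "f' S = 0"
        using S0 by (simp add: f'_def blinfun.diff_left blinfun.scaleR_left blinfun.diff_right
            blinfun.scaleR_right field_simps)
    qed
    then have "f' \<in> span (insert G A)"
      using real_vector.span_mono[of A "insert G A"] by auto
    moreover have "G \<in> span (insert G A)"
      by (simp add: real_vector.span_base)
    ultimately have "f' + (f S0 / G S0) *\<^sub>R G \<in> span (insert G A)"
      by (intro real_vector.span_add real_vector.span_scale)
    then show ?thesis
      by (simp add: f'_def)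
  qed
qed

lemma convex_on_norm_line:
  fixes y z :: "'a::real_normed_vector"
  assumes "convex A"
  shows "convex_on A (\<lambda>s. norm (y + s *\<^sub>R z))"
proof (rule convex_onI)
  fix t s s' :: real assume t: "0 < t" "t < 1"
  have "y + ((1 - t) *\<^sub>R s + t *\<^sub>R s') *\<^sub>R z = (1 - t) *\<^sub>R (y + s *\<^sub>R z) + t *\<^sub>R (y + s' *\<^sub>R z)"
    by (simp add: algebra_simps)
  also have "norm \<dots> \<le> (1 - t) * norm (y + s *\<^sub>R z) + t * norm (y + s' *\<^sub>R z)"
    using t by (intro order_trans[OF norm_triangle_ineq]) simp
  finally show "norm (y + ((1 - t) *\<^sub>R s + t *\<^sub>R s') *\<^sub>R z)
      \<le> (1 - t) * norm (y + s *\<^sub>R z) + t * norm (y + s' *\<^sub>R z)" .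
qed (rule assms)

lemma norm_line_le_max:
  fixes u w :: "'a::real_normed_vector"
  assumes "\<bar>s\<bar> \<le> 1"
  shows "norm (u + s *\<^sub>R w) \<le> max (norm (u - w)) (norm (u + w))"
proof -
  have "s \<in> {-1..1}"
    using assms by auto
  then show ?thesis
    using convex_on_le_max[OF convex_on_norm_line[of "{-1..1}" u w], of s] by simp
qed

lemma norm_line_lt_if_lt_further:
  fixes y z :: "'a::real_normed_vector"
  assumes y: "norm y = 1" and t: "0 < t" "t \<le> s" and lt: "norm (y + s *\<^sub>R z) < 1 + s * c"
  shows "norm (y + t *\<^sub>R z) < 1 + t * c"
proof -
  have s: "0 < s"
    using t by simp
  have "norm (y + t *\<^sub>R z) = norm (y + ((1 - t / s) *\<^sub>R 0 + (t / s) *\<^sub>R s) *\<^sub>R z)"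
    using s by simp
  also have "\<dots> \<le> (1 - t / s) * norm (y + 0 *\<^sub>R z) + (t / s) * norm (y + s *\<^sub>R z)"
    using t s by (intro convex_onD[OF convex_on_norm_line[OF convex_UNIV]]) auto
  also have "\<dots> < (1 - t / s) + (t / s) * (1 + s * c)"
    using mult_strict_left_mono[OF lt, of "t / s"] y t s by simp
  also have "\<dots> = 1 + t * c"
    using s by (simp add: field_simps)
  finally show ?thesis .
qed

lemma norm_line_supporting_slope:
  fixes y z :: "'a::real_normed_vector"
  assumes y: "norm y = 1" and above: "\<And>t. 0 < t \<Longrightarrow> 1 + t * c \<le> norm (y + t *\<^sub>R z)"
  shows "\<exists>m\<ge>c. \<forall>s. 1 + s * m \<le> norm (y + s *\<^sub>R z)"
proof -
  define f where "f s = norm (y + s *\<^sub>R z)" for s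
  define m where "m = Inf ((\<lambda>s. (f s - 1) / s) ` {0<..})"
  have f0: "f 0 = 1"
    using y by (simp add: f_def)
  have slope_ge: "c \<le> (f s - 1) / s" if "0 < s" for s
    using above[OF that] that by (simp add: f_def le_divide_eq algebra_simps)
  then have bdd: "bdd_below ((\<lambda>s. (f s - 1) / s) ` {0<..})"
    by (intro bdd_belowI2[where m = c]) simp
  have "c \<le> m"
    unfolding m_def by (rule cInf_greatest) (auto simp: slope_ge)
  have right: "m \<le> (f s - 1) / s" if "0 < s" for s
    unfolding m_def using bdd that by (auto intro: cInf_lower)
  have left: "(f s - 1) / s \<le> m" if s: "s < 0" for s
    unfolding m_def
  proof (rule cInf_greatest)
    fix q assume "q \<in> (\<lambda>s. (f s - 1) / s) ` {0<..}"
    then obtain s' where s': "0 < s'" "q = (f s' - 1) / s'"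
      by auto
    have cvx: "convex_on UNIV f"
      unfolding f_def by (rule convex_on_norm_line) simp
    have "(f s - f 0) / (s - 0) \<le> (f 0 - f s') / (0 - s')"
      using convex_on_slope_le[OF cvx, of s s' 0] s s' by auto
    also have "\<dots> = q"
      using s' f0 by (simp add: field_simps)
    finally show "(f s - 1) / s \<le> q"
      using f0 by simp
  qed auto
  have "1 + s * m \<le> f s" for s
  proof -
    consider "0 < s" | "s = 0" | "s < 0"
      by linarith
    then show ?thesis
    proof cases
      case 1
      then show ?thesis
        using right[OF 1] by (simp add: pos_le_divide_eq algebra_simps)
    next
      case 2
      then show ?thesis
        using f0 by simp
    next
      case 3
      then show ?thesis
        using left[OF 3] by (simp add: neg_divide_le_eq algebra_simps)
    qed
  qed
  then show ?thesis
    using \<open>c \<le> m\<close> by (auto simp: f_def)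
qed

lemma J_memI:
  fixes f :: "'a::real_normed_vector \<Rightarrow>\<^sub>L real"
  assumes le: "\<And>v. f v \<le> norm v" and z: "norm z \<le> 1" "f z = 1"
  shows "f \<in> J z"
proof -
  have "norm f \<le> 1"
  proof (rule norm_blinfun_bound)
    show "norm (f v) \<le> 1 * norm v" for v
      using le[of v] le[of "- v"] by (simp add: blinfun.minus_right)
  qed simp
  moreover have "1 \<le> norm f"
  proof -
    have "1 \<le> norm f * norm z"
      using norm_blinfun[of f z] z by simp
    also have "\<dots> \<le> norm f"
      using z by (simp add: mult_left_le)
    finally show ?thesis .
  qed
  ultimately show ?thesis
    using z by (simp add: J_def)
qed

lemma J_scaleR:
  assumes g: "g \<in> J y" and r: "\<bar>r\<bar> = 1"
  shows "r *\<^sub>R g \<in> J (r *\<^sub>R y)"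
proof -
  have "(r *\<^sub>R g) (r *\<^sub>R y) = (r * r) * g y"
    by (simp add: blinfun.scaleR_left blinfun.scaleR_right)
  also have "\<dots> = 1"
    using g r by (simp add: J_def abs_mult_self_eq[of r, symmetric])
  finally show ?thesis
    using g r by (simp add: J_def)
qed

lemma smooth_J_scaleR:
  fixes y :: "'a::real_normed_vector"
  assumes sm: "smooth_space TYPE('a)"
    and y: "norm y = 1" and g: "g \<in> J y" and h: "h \<in> J (r *\<^sub>R y)" and r: "\<bar>r\<bar> = 1"
  shows "h = r *\<^sub>R g"
proof -
  have "\<exists>!f. f \<in> J (r *\<^sub>R y)"
    using sm y r by (simp add: smooth_space_def)
  then show ?thesis
    using J_scaleR[OF g r] h by blast
qed

lemma strictly_convex_J_eq:
  fixes u v :: "'a::real_normed_vector"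
  assumes sc: "strictly_convex_space TYPE('a)"
    and u: "norm u = 1" and v: "norm v = 1" and g: "g \<in> J u" "g \<in> J v"
  shows "u = v"
proof (rule ccontr)
  assume "u \<noteq> v"
  moreover have "closed_segment u v \<subseteq> sphere 0 1"
  proof
    fix p assume "p \<in> closed_segment u v"
    then obtain t where t: "0 \<le> t" "t \<le> 1" and p: "p = (1 - t) *\<^sub>R u + t *\<^sub>R v"
      by (auto simp: closed_segment_def)
    have "norm p \<le> (1 - t) * norm u + t * norm v"
      unfolding p using t by (intro order_trans[OF norm_triangle_ineq]) simp
    then have "norm p \<le> 1"
      using u v by simp
    moreover have "1 \<le> norm p"
    proof -
      have "1 = g p"
        using g by (simp add: J_def p blinfun.add_right blinfun.scaleR_right)
      also have "\<dots> \<le> norm g * norm p"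
        using norm_blinfun[of g p] by simp
      finally show ?thesis
        using g by (simp add: J_def)
    qed
    ultimately show "p \<in> sphere 0 1"
      by simp
  qed
  ultimately show False
    using sc unfolding strictly_convex_space_def by blast
qed

lemma strictly_convex_J_scaleR_eq:
  fixes u v :: "'a::real_normed_vector"
  assumes sc: "strictly_convex_space TYPE('a)"
    and u: "norm u = 1" and v: "norm v = 1" and f: "f \<in> J u" and g: "g \<in> J v"
    and fg: "f = r *\<^sub>R g"
  shows "u = r *\<^sub>R v"
proof -
  have "norm f = \<bar>r\<bar> * norm g"
    using fg by simp
  then have r: "\<bar>r\<bar> = 1"
    using f g by (simp add: J_def)
  have "g (r *\<^sub>R u) = f u"
    using fg by (simp add: blinfun.scaleR_left blinfun.scaleR_right)
  then have "g \<in> J (r *\<^sub>R u)"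
    using f g by (simp add: J_def)
  then have "r *\<^sub>R u = v"
    using strictly_convex_J_eq[OF sc _ v _ g] u r by simp
  then have "r *\<^sub>R v = (r * r) *\<^sub>R u"
    by (metis scaleR_scaleR)
  also have "\<dots> = u"
    using r by (simp add: abs_mult_self_eq[of r, symmetric])
  finally show ?thesis
    by simp
qed

text \<open>Hahn--Banach in the plane: a supporting slope \<open>m\<close> of \<open>s \<mapsto> \<parallel>y + s z\<parallel>\<close> at \<open>0\<close>
  is realised by the functional \<open>y \<mapsto> 1, z \<mapsto> m\<close>. This is the only place where
  \<open>dim Y = 2\<close> is used.\<close>

lemma two_dim_J_exists:
  fixes y z :: "'a::real_normed_vector"
  assumes dim2: "dim (UNIV :: 'a set) = 2" and y: "norm y = 1" and zy: "z \<notin> span {y}"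
    and low: "\<And>s. 1 + s * m \<le> norm (y + s *\<^sub>R z)"
  shows "\<exists>h\<in>J y. h z = m"
proof -
  have yz: "y \<noteq> z"
    using zy real_vector.span_base[of y "{y}"] by auto
  have "independent {z, y}"
    using zy y by (intro real_vector.independent_insertI)
      (auto simp: real_vector.independent_insert real_vector.independent_empty)
  then have indep: "independent {y, z}"
    by (simp add: insert_commute)
  have coords: "\<exists>\<alpha> \<beta>. v = \<alpha> *\<^sub>R y + \<beta> *\<^sub>R z" for v
  proof -
    have "v \<in> span {y, z}"
    proof (rule ccontr)
      assume v: "v \<notin> span {y, z}"
      then have "v \<noteq> y" "v \<noteq> z"
        using real_vector.span_base[of _ "{y, z}"] by auto
      then have "independent {v, y, z}" and "card {v, y, z} = 3"
        using real_vector.independent_insertI[OF v indep] yz by auto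
      then show False
        using card_le_dim_if_independent[of "{v, y, z}" UNIV] dim2 by simp
    qed
    then obtain \<alpha> where "v - \<alpha> *\<^sub>R y \<in> span {z}"
      by (auto simp: real_vector.span_insert)
    then obtain \<beta> where "v - \<alpha> *\<^sub>R y = \<beta> *\<^sub>R z"
      by (auto simp: real_vector.span_singleton)
    then show ?thesis
      by (metis add.commute diff_eq_eq)
  qed
  have m: "\<bar>m\<bar> \<le> norm z"
    using low[of 1] low[of "-1"] norm_triangle_ineq[of y z] norm_triangle_ineq4[of y z] y by simp
  define h where "h = real_vector.construct {y, z} (\<lambda>v. if v = y then 1 else m)"
  have lin: "linear h"
    unfolding h_def by (rule real_vector.linear_construct[OF indep])
  have "h y = 1" "h z = m"
    using yz unfolding h_def by (simp_all add: real_vector.construct_basis[OF indep])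
  then have h: "h (\<alpha> *\<^sub>R y + \<beta> *\<^sub>R z) = \<alpha> + \<beta> * m" for \<alpha> \<beta>
    by (simp add: real_vector.linear_add[OF lin] real_vector.linear_scale[OF lin])
  have h_le: "h v \<le> norm v" for v
  proof -
    obtain \<alpha> \<beta> where v: "v = \<alpha> *\<^sub>R y + \<beta> *\<^sub>R z"
      using coords by blast
    show ?thesis
    proof (cases "0 < \<alpha>")
      case True
      have "h v = \<alpha> * (1 + (\<beta> / \<alpha>) * m)"
        using True by (simp add: v h field_simps)
      also have "\<dots> \<le> \<alpha> * norm (y + (\<beta> / \<alpha>) *\<^sub>R z)"
        using True low[of "\<beta> / \<alpha>"] by (intro mult_left_mono) auto
      also have "\<dots> = norm (\<alpha> *\<^sub>R (y + (\<beta> / \<alpha>) *\<^sub>R z))"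
        using True by simp
      also have "\<dots> = norm v"
        using True by (simp add: v scaleR_add_right)
      finally show ?thesis .
    next
      case False
      have "\<beta> * m \<le> \<bar>\<beta>\<bar> * norm z"
        using m abs_ge_self[of "\<beta> * m"] mult_left_mono[OF m, of "\<bar>\<beta>\<bar>"]
        by (simp add: abs_mult)
      then have "h v \<le> \<bar>\<beta>\<bar> * norm z - \<bar>\<alpha>\<bar>"
        using False by (simp add: v h)
      also have "\<dots> = norm (\<beta> *\<^sub>R z) - norm (- (\<alpha> *\<^sub>R y))"
        using y by simp
      also have "\<dots> \<le> norm v"
        using norm_diff_ineq[of "\<beta> *\<^sub>R z" "\<alpha> *\<^sub>R y"] by (simp add: v add.commute)
      finally show ?thesis .
    qed
  qed
  have "bounded_linear h"
  proof (rule bounded_linear_intro[where K = 1])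
    show "norm (h v) \<le> norm v * 1" for v
      using h_le[of v] h_le[of "- v"] real_vector.linear_neg[OF lin, of v] by simp
  qed (simp_all add: real_vector.linear_add[OF lin] real_vector.linear_scale[OF lin])
  then have apply_h: "blinfun_apply (Blinfun h) = h"
    by (rule bounded_linear_Blinfun_apply)
  have "Blinfun h \<in> J y"
    using h[of 1 0] h_le y by (intro J_memI) (simp_all add: apply_h)
  moreover have "Blinfun h z = m"
    using h[of 0 1] by (simp add: apply_h)
  ultimately show ?thesis
    by blast
qed

lemma smooth_norm_line_eventually_lt:
  fixes y z :: "'a::real_normed_vector"
  assumes dim2: "dim (UNIV :: 'a set) = 2" and sm: "smooth_space TYPE('a)"
    and y: "norm y = 1" and g: "g \<in> J y" "g z = 0" and c: "0 < c"
  shows "\<forall>\<^sub>F t in at_right 0. norm (y + t *\<^sub>R z) < 1 + t * c"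
proof -
  have "\<exists>t>0. norm (y + t *\<^sub>R z) < 1 + t * c"
  proof (rule ccontr)
    assume "\<not> ?thesis"
    then have above: "\<And>t. 0 < t \<Longrightarrow> 1 + t * c \<le> norm (y + t *\<^sub>R z)"
      by (meson not_less)
    then obtain m where "c \<le> m" and low: "\<And>s. 1 + s * m \<le> norm (y + s *\<^sub>R z)"
      using norm_line_supporting_slope[OF y] by blast
    have "z \<notin> span {y}"
    proof
      assume "z \<in> span {y}"
      then obtain k where "z = k *\<^sub>R y"
        by (auto simp: real_vector.span_singleton)
      then have "z = 0"
        using g by (simp add: J_def blinfun.scaleR_right)
      then show False
        using above[of 1] c y by simp
    qed
    then obtain h where "h \<in> J y" "h z = m"
      using two_dim_J_exists[OF dim2 y _ low] by blast
    moreover have "\<exists>!f. f \<in> J y"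
      using sm y by (simp add: smooth_space_def)
    ultimately have "m = 0"
      using g by auto
    then show False
      using \<open>c \<le> m\<close> c by simp
  qed
  then obtain t0 where t0: "0 < t0" "norm (y + t0 *\<^sub>R z) < 1 + t0 * c"
    by blast
  have "norm (y + t *\<^sub>R z) < 1 + t * c" if "0 < t" "t < t0" for t
    using norm_line_lt_if_lt_further[OF y that(1) _ t0(2)] that(2) by simp
  then show ?thesis
    unfolding eventually_at_right_field using t0(1) by auto
qed

lemma L3_arith [simp]:
  "L3 a b c + L3 a' b' c' = L3 (a + a') (b + b') (c + c')"
  "L3 a b c - L3 a' b' c' = L3 (a - a') (b - b') (c - c')"
  "- L3 a b c = L3 (- a) (- b) (- c)"
  "r *\<^sub>R L3 a b c = L3 (r * a) (r * b) (r * c)"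
  by (simp_all add: plus_linf3_def minus_linf3_def uminus_linf3_def scaleR_linf3_def)

lemma bounded_linear_linf3_coords:
  "bounded_linear c1" "bounded_linear c2" "bounded_linear c3"
  by (rule bounded_linear_intro[where K = 1], auto simp: norm_linf3_def)+

definition vertex :: "nat \<Rightarrow> linf3" where
  "vertex i = (if i = 1 then L3 1 1 1 else if i = 2 then L3 (-1) 1 1
    else if i = 3 then L3 (-1) (-1) 1 else L3 1 (-1) 1)"

lemma vertex_simps:
  "vertex 1 = L3 1 1 1" "vertex (Suc 0) = L3 1 1 1" "vertex 2 = L3 (-1) 1 1"
  "vertex 3 = L3 (-1) (-1) 1" "vertex 4 = L3 1 (-1) 1"
  by (simp_all add: vertex_def)

lemma linf3_eq_vertex_combination:
  "x = ((c1 x + c3 x) / 2) *\<^sub>R vertex 1 + ((c2 x - c1 x) / 2) *\<^sub>R vertex 2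
     + ((c3 x - c2 x) / 2) *\<^sub>R vertex 3"
  by (simp add: vertex_simps linf3_eq_iff field_simps)

lemma vertex_4_eq: "vertex 4 = vertex 1 - vertex 2 + vertex 3"
  by (simp add: vertex_simps)

text \<open>The unit ball of \<open>\<ell>\<^sub>\<infinity>\<^sup>3\<close> is the cube with the vertices \<open>\<plusminus>vertex i\<close>;
  the bound spreads from the corners to edges, faces and the whole cube by convexity of the
  norm along lines.\<close>

lemma norm_blinfun_linf3_le:
  fixes A :: "linf3 \<Rightarrow>\<^sub>L 'b::real_normed_vector"
  assumes vert: "\<And>i. i \<in> {1, 2, 3, 4} \<Longrightarrow> norm (A (vertex i)) \<le> K"
  shows "norm A \<le> K"
proof -
  have line: "norm (A (u + s *\<^sub>R w)) \<le> K"
    if "\<bar>s\<bar> \<le> 1" "norm (A (u - w)) \<le> K" "norm (A (u + w)) \<le> K" for u w s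
    using norm_line_le_max[OF that(1), of "A u" "A w"] that(2,3)
    by (simp add: blinfun.add_right blinfun.diff_right blinfun.scaleR_right)
  have top: "norm (A (L3 a b 1)) \<le> K" if "\<bar>a\<bar> = 1" "\<bar>b\<bar> = 1" for a b
    using that vert[of 1] vert[of 2] vert[of 3] vert[of 4]
    by (auto simp: vertex_simps abs_if split: if_splits)
  have corner: "norm (A (L3 a b c)) \<le> K" if "\<bar>a\<bar> = 1" "\<bar>b\<bar> = 1" "\<bar>c\<bar> = 1" for a b c
  proof (cases "c = 1")
    case False
    then have "A (L3 a b c) = - A (L3 (- a) (- b) 1)"
      using that(3) blinfun.minus_right[of A "L3 (- a) (- b) 1"]
      by (auto simp: abs_if split: if_splits)
    then show ?thesis
      using top[of "- a" "- b"] that by simp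
  qed (use top that in simp)
  have edge: "norm (A (L3 a b c)) \<le> K" if "\<bar>a\<bar> = 1" "\<bar>b\<bar> = 1" "\<bar>c\<bar> \<le> 1" for a b c
    using line[OF that(3), of "L3 a b 0" "L3 0 0 1"] corner[OF that(1,2)] by simp
  have face: "norm (A (L3 a b c)) \<le> K" if "\<bar>a\<bar> = 1" "\<bar>b\<bar> \<le> 1" "\<bar>c\<bar> \<le> 1" for a b c
    using line[OF that(2), of "L3 a 0 c" "L3 0 1 0"] edge[OF that(1) _ that(3)] by simp
  have cube: "norm (A (L3 a b c)) \<le> K" if "\<bar>a\<bar> \<le> 1" "\<bar>b\<bar> \<le> 1" "\<bar>c\<bar> \<le> 1" for a b c
    using line[OF that(1), of "L3 0 b c" "L3 1 0 0"] face[OF _ that(2,3)] by simp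
  have unit: "norm (A x) \<le> K" if "norm x \<le> 1" for x
    using cube[of "c1 x" "c2 x" "c3 x"] that by (cases x) (simp add: norm_linf3_def)
  show ?thesis
  proof (rule norm_blinfun_bound)
    show "0 \<le> K"
      using vert[of 1] norm_ge_zero order_trans by blast
    show "norm (A x) \<le> K * norm x" for x
    proof (cases "x = 0")
      case False
      have "norm (A x) = norm x * norm (A (x /\<^sub>R norm x))"
        using False by (simp add: blinfun.scaleR_right)
      also have "\<dots> \<le> norm x * K"
        using False by (intro mult_left_mono unit) simp_all
      finally show ?thesis
        by (simp add: mult.commute)
    qed simp
  qed
qed

definition linf3_functional :: "linf3 \<Rightarrow> linf3 \<Rightarrow>\<^sub>L real" where
  "linf3_functional p = Blinfun (\<lambda>x. c1 p * c1 x + c2 p * c2 x + c3 p * c3 x)"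

lemma linf3_functional_apply [simp]:
  "linf3_functional p x = c1 p * c1 x + c2 p * c2 x + c3 p * c3 x"
proof -
  have "bounded_linear (\<lambda>x. c1 p * c1 x + c2 p * c2 x + c3 p * c3 x)"
    using bounded_linear_linf3_coords by (intro bounded_linear_intros)
  then show ?thesis
    by (simp add: linf3_functional_def bounded_linear_Blinfun_apply)
qed

definition dual_tensor ::
  "('b::real_normed_vector \<Rightarrow>\<^sub>L real) \<Rightarrow> 'a::real_normed_vector \<Rightarrow> ('a \<Rightarrow>\<^sub>L 'b) \<Rightarrow>\<^sub>L real" where
  "dual_tensor g x = Blinfun (\<lambda>S. g (blinfun_apply S x))"

lemma dual_tensor_apply [simp]: "dual_tensor g x S = g (S x)"
proof -
  have "bounded_linear (\<lambda>S. g (blinfun_apply S x))"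
    using bounded_linear_apply_blinfun by (intro bounded_linear_intros)
  then show ?thesis
    by (simp add: dual_tensor_def bounded_linear_Blinfun_apply)
qed

lemma J_dual_tensor:
  fixes T :: "'a::real_normed_vector \<Rightarrow>\<^sub>L 'b::real_normed_vector"
  assumes g: "g \<in> J (T x)" and x: "norm x = 1" and T: "norm T = 1"
  shows "dual_tensor g x \<in> J T"
proof (rule J_memI)
  show "dual_tensor g x S \<le> norm S" for S
  proof -
    have "g (S x) \<le> norm g * norm (S x)"
      using norm_blinfun[of g "S x"] by simp
    also have "\<dots> \<le> norm S"
      using g x norm_blinfun[of S x] by (simp add: J_def)
    finally show ?thesis
      by simp
  qed
qed (use g T in \<open>simp_all add: J_def\<close>)

text \<open>Test a vanishing combination against the rank-one operators \<open>x \<mapsto> p(x) w\<close>, where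
  \<open>p\<close> is \<open>1\<close> at two adjacent vertices and \<open>0\<close> at the other two.\<close>

lemma dual_tensor_vertices_dependence:
  fixes g :: "nat \<Rightarrow> 'b::real_normed_vector \<Rightarrow>\<^sub>L real"
  assumes "(\<Sum>i\<in>{1, 2, 3, 4}. lam i *\<^sub>R dual_tensor (g i) (vertex i)) = 0"
  shows "\<exists>\<phi>. \<forall>i\<in>{1, 2, 3, 4}. lam i *\<^sub>R g i = (-1) ^ i *\<^sub>R \<phi>"
proof -
  have rank_one: "(\<Sum>i\<in>{1, 2, 3, 4}. lam i * (linf3_functional p (vertex i) * g i w)) = 0" for p w
  proof -
    have "(\<Sum>i\<in>{1, 2, 3, 4}. lam i *\<^sub>R dual_tensor (g i) (vertex i))
        (blinfun_scaleR_left w o\<^sub>L linf3_functional p) = 0"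
      unfolding assms by simp
    then show ?thesis
      by (simp only: blinfun.sum_left blinfun.scaleR_left dual_tensor_apply real_scaleR_def
          blinfun_apply_blinfun_compose blinfun_scaleR_left.rep_eq blinfun.scaleR_right)
  qed
  note simps = vertex_simps blinfun.minus_left blinfun.scaleR_left eq_neg_iff_add_eq_0 add.commute
  have 12: "lam 1 *\<^sub>R g 1 = - (lam 2 *\<^sub>R g 2)"
    using rank_one[of "L3 0 (1/2) (1/2)"] by (intro blinfun_eqI) (simp add: simps)
  have 23: "lam 3 *\<^sub>R g 3 = - (lam 2 *\<^sub>R g 2)"
    using rank_one[of "L3 (-1/2) 0 (1/2)"] by (intro blinfun_eqI) (simp add: simps)
  have 34: "lam 4 *\<^sub>R g 4 = - (lam 3 *\<^sub>R g 3)"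
    using rank_one[of "L3 0 (-1/2) (1/2)"] by (intro blinfun_eqI) (simp add: simps)
  show ?thesis
    using 12 23 34 by (intro exI[of _ "lam 2 *\<^sub>R g 2"]) simp
qed

lemma dual_tensor_vertices_independent_if_coeff_zero:
  fixes g :: "nat \<Rightarrow> 'b::real_normed_vector \<Rightarrow>\<^sub>L real"
  assumes sum: "(\<Sum>i\<in>{1, 2, 3, 4}. lam i *\<^sub>R dual_tensor (g i) (vertex i)) = 0"
    and g: "\<And>i. i \<in> {1, 2, 3, 4} \<Longrightarrow> g i \<noteq> 0"
    and k: "k \<in> {1, 2, 3, 4}" "lam k = 0"
  shows "\<forall>i\<in>{1, 2, 3, 4}. lam i = 0"
proof -
  obtain \<phi> where \<phi>: "\<And>i. i \<in> {1, 2, 3, 4} \<Longrightarrow> lam i *\<^sub>R g i = (-1) ^ i *\<^sub>R \<phi>"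
    using dual_tensor_vertices_dependence[OF sum] by blast
  have "\<phi> = 0"
    using \<phi>[OF k(1)] k(2) by simp
  then show ?thesis
    using \<phi> g by fastforce
qed

lemma J_nonpos_on_vertex_kernel:
  fixes T S :: "linf3 \<Rightarrow>\<^sub>L 'b::real_normed_vector"
  assumes dim2: "dim (UNIV :: 'b set) = 2" and sm: "smooth_space TYPE('b)"
    and unit: "\<And>i. i \<in> {1, 2, 3, 4} \<Longrightarrow> norm (T (vertex i)) = 1"
    and g: "\<And>i. i \<in> {1, 2, 3, 4} \<Longrightarrow> g i \<in> J (T (vertex i))"
    and ker: "\<And>i. i \<in> {1, 2, 3, 4} \<Longrightarrow> g i (S (vertex i)) = 0"
    and f: "f \<in> J T"
  shows "f S \<le> 0"
proof (rule ccontr)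
  assume "\<not> f S \<le> 0"
  then have pos: "0 < f S"
    by simp
  have "\<forall>\<^sub>F t in at_right 0. norm ((T + t *\<^sub>R S) (vertex i)) < 1 + t * f S"
    if "i \<in> {1, 2, 3, 4}" for i
    using smooth_norm_line_eventually_lt[OF dim2 sm unit[OF that] g[OF that] ker[OF that] pos]
    by (simp add: blinfun.add_left blinfun.scaleR_left)
  then have "\<forall>\<^sub>F t in at_right 0.
      0 < t \<and> (\<forall>i\<in>{1, 2, 3, 4}. norm ((T + t *\<^sub>R S) (vertex i)) < 1 + t * f S)"
    by (intro eventually_conj eventually_at_right_less eventually_ball_finite ballI) auto
  then obtain t where "0 < t"
    and lt: "\<forall>i\<in>{1, 2, 3, 4}. norm ((T + t *\<^sub>R S) (vertex i)) < 1 + t * f S"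
    using eventually_happens'[OF trivial_limit_at_right_real] by blast
  define K where "K = Max ((\<lambda>i. norm ((T + t *\<^sub>R S) (vertex i))) ` {1, 2, 3, 4})"
  have "norm (T + t *\<^sub>R S) \<le> K"
    unfolding K_def by (intro norm_blinfun_linf3_le Max_ge finite_imageI imageI) simp_all
  also have "K < 1 + t * f S"
    using lt by (simp add: K_def)
  also have "\<dots> = f (T + t *\<^sub>R S)"
    using f by (simp add: J_def blinfun.add_right blinfun.scaleR_right)
  also have "\<dots> \<le> norm (T + t *\<^sub>R S)"
    using f norm_blinfun[of f "T + t *\<^sub>R S"] by (simp add: J_def)
  finally show False
    by simp
qed

lemma span_J_eq_span_dual_tensors:
  fixes T :: "linf3 \<Rightarrow>\<^sub>L 'b::real_normed_vector"
  assumes dim2: "dim (UNIV :: 'b set) = 2" and sm: "smooth_space TYPE('b)"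
    and T: "norm T = 1"
    and M: "\<And>i. i \<in> {1, 2, 3, 4} \<Longrightarrow> vertex i \<in> M T"
    and g: "\<And>i. i \<in> {1, 2, 3, 4} \<Longrightarrow> g i \<in> J (T (vertex i))"
  shows "span (J T) = span ((\<lambda>i. dual_tensor (g i) (vertex i)) ` {1, 2, 3, 4})"
proof
  have unit: "norm (T (vertex i)) = 1" if "i \<in> {1, 2, 3, 4}" for i
    using M[OF that] T by (simp add: M_def)
  have "f \<in> span ((\<lambda>i. dual_tensor (g i) (vertex i)) ` {1, 2, 3, 4})" if f: "f \<in> J T" for f
  proof (rule blinfun_in_span_if_kernels_subset)
    fix S assume S: "\<forall>G\<in>(\<lambda>i. dual_tensor (g i) (vertex i)) ` {1, 2, 3, 4}. G S = 0"
    have ker: "g i (S (vertex i)) = 0" if "i \<in> {1, 2, 3, 4}" for i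
    proof -
      have "dual_tensor (g i) (vertex i) S = 0"
        using S that by blast
      then show ?thesis
        by simp
    qed
    have "f S \<le> 0"
      by (rule J_nonpos_on_vertex_kernel[OF dim2 sm unit g ker f])
    moreover have "f (- S) \<le> 0"
    proof (rule J_nonpos_on_vertex_kernel[OF dim2 sm unit g _ f])
      show "g i ((- S) (vertex i)) = 0" if "i \<in> {1, 2, 3, 4}" for i
        using ker[OF that] by (simp add: blinfun.minus_left blinfun.minus_right)
    qed
    ultimately show "f S = 0"
      by (simp add: blinfun.minus_right)
  qed simp
  then show "span (J T) \<subseteq> span ((\<lambda>i. dual_tensor (g i) (vertex i)) ` {1, 2, 3, 4})"
    by (intro real_vector.span_minimal real_vector.subspace_span) blast
  show "span ((\<lambda>i. dual_tensor (g i) (vertex i)) ` {1, 2, 3, 4}) \<subseteq> span (J T)"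
    using g M T by (intro real_vector.span_mono) (auto intro: J_dual_tensor simp: M_def)
qed

lemma dim_span_dual_tensors_first_three:
  fixes g :: "nat \<Rightarrow> 'b::real_normed_vector \<Rightarrow>\<^sub>L real"
  assumes g: "\<And>i. i \<in> {1, 2, 3, 4} \<Longrightarrow> g i \<noteq> 0"
  shows "dim (span ((\<lambda>i. dual_tensor (g i) (vertex i)) ` {1, 2, 3})) = 3"
proof -
  have "dim (span ((\<lambda>i. dual_tensor (g i) (vertex i)) ` {1, 2, 3})) = card {1, 2, 3 :: nat}"
  proof (rule dim_span_image_eq_card)
    fix lam assume "(\<Sum>i\<in>{1, 2, 3}. lam i *\<^sub>R dual_tensor (g i) (vertex i)) = 0"
    then have "(\<Sum>i\<in>{1, 2, 3, 4}. (lam(4 := 0)) i *\<^sub>R dual_tensor (g i) (vertex i)) = 0"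
      by simp
    then have "\<forall>i\<in>{1, 2, 3, 4}. (lam(4 := 0)) i = 0"
      using g by (intro dual_tensor_vertices_independent_if_coeff_zero[where k = 4]) simp_all
    then show "\<forall>i\<in>{1, 2, 3}. lam i = 0"
      by simp
  qed simp
  then show ?thesis
    by simp
qed

lemma dim_span_dual_tensors_parallel:
  fixes y :: "nat \<Rightarrow> 'b::real_normed_vector"
  assumes sm: "smooth_space TYPE('b)"
    and unit: "\<And>i. i \<in> {1, 2, 3, 4} \<Longrightarrow> norm (y i) = 1"
    and g: "\<And>i. i \<in> {1, 2, 3, 4} \<Longrightarrow> g i \<in> J (y i)"
    and par: "\<And>i. i \<in> {1, 2, 3, 4} \<Longrightarrow> y i \<in> span {y 1}"
  shows "dim (span ((\<lambda>i. dual_tensor (g i) (vertex i)) ` {1, 2, 3, 4})) = 3"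
proof -
  define G where "G i = dual_tensor (g i) (vertex i)" for i
  have "\<exists>e. y i = e *\<^sub>R y 1" if "i \<in> {1, 2, 3, 4}" for i
    using par[OF that] by (auto simp: real_vector.span_singleton)
  then obtain \<epsilon> where \<epsilon>: "\<And>i. i \<in> {1, 2, 3, 4} \<Longrightarrow> y i = \<epsilon> i *\<^sub>R y 1"
    by metis
  have sign: "\<bar>\<epsilon> i\<bar> = 1" if "i \<in> {1, 2, 3, 4}" for i
    using unit[OF that] unit[of 1] \<epsilon>[OF that] by simp
  have g_eq: "g i = \<epsilon> i *\<^sub>R g 1" if i: "i \<in> {1, 2, 3, 4}" for i
    using smooth_J_scaleR[OF sm unit[of 1] g[of 1] _ sign[OF i]] g[OF i] \<epsilon>[OF i] by simp
  have G_eq: "dual_tensor (g 1) (vertex i) = \<epsilon> i *\<^sub>R G i" if i: "i \<in> {1, 2, 3, 4}" for i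
  proof -
    have "\<epsilon> i * \<epsilon> i = 1"
      using sign[OF i] by (simp add: abs_mult_self_eq[of "\<epsilon> i", symmetric])
    then show ?thesis
      by (intro blinfun_eqI) (simp add: G_def g_eq[OF i] blinfun.scaleR_left)
  qed
  have "G 4 = \<epsilon> 4 *\<^sub>R dual_tensor (g 1) (vertex 4)"
    by (intro blinfun_eqI) (simp add: G_def g_eq[of 4] blinfun.scaleR_left)
  also have "dual_tensor (g 1) (vertex 4)
      = dual_tensor (g 1) (vertex 1) - dual_tensor (g 1) (vertex 2) + dual_tensor (g 1) (vertex 3)"
    by (intro blinfun_eqI)
      (simp add: vertex_4_eq blinfun.add_left blinfun.diff_left blinfun.add_right blinfun.diff_right)
  also have "\<dots> = \<epsilon> 1 *\<^sub>R G 1 - \<epsilon> 2 *\<^sub>R G 2 + \<epsilon> 3 *\<^sub>R G 3"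
    using G_eq[of 1] G_eq[of 2] G_eq[of 3] by simp
  finally have "G 4 \<in> span (G ` {1, 2, 3})"
    by (simp add: real_vector.span_base real_vector.span_add real_vector.span_diff
        real_vector.span_scale)
  then have "span (G ` {1, 2, 3, 4}) = span (G ` {1, 2, 3})"
    using real_vector.span_redundant[of "G 4" "G ` {1, 2, 3}"] by (simp add: insert_commute)
  moreover have "g i \<noteq> 0" if "i \<in> {1, 2, 3, 4}" for i
    using g[OF that] by (auto simp: J_def)
  ultimately show ?thesis
    using dim_span_dual_tensors_first_three[of g] by (simp add: G_def)
qed

lemma dim_span_dual_tensors_nonparallel:
  fixes y :: "nat \<Rightarrow> 'b::real_normed_vector"
  assumes sc: "strictly_convex_space TYPE('b)"
    and unit: "\<And>i. i \<in> {1, 2, 3, 4} \<Longrightarrow> norm (y i) = 1"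
    and g: "\<And>i. i \<in> {1, 2, 3, 4} \<Longrightarrow> g i \<in> J (y i)"
    and j: "j \<in> {1, 2, 3, 4}" "y j \<notin> span {y 1}"
  shows "dim (span ((\<lambda>i. dual_tensor (g i) (vertex i)) ` {1, 2, 3, 4})) = 4"
proof -
  have one: "1 \<in> {1, 2, 3, 4 :: nat}"
    by simp
  have g0: "g i \<noteq> 0" if "i \<in> {1, 2, 3, 4}" for i
    using g[OF that] by (auto simp: J_def)
  have "dim (span ((\<lambda>i. dual_tensor (g i) (vertex i)) ` {1, 2, 3, 4})) = card {1, 2, 3, 4 :: nat}"
  proof (rule dim_span_image_eq_card)
    fix lam assume sum: "(\<Sum>i\<in>{1, 2, 3, 4}. lam i *\<^sub>R dual_tensor (g i) (vertex i)) = 0"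
    have "lam 1 = 0"
    proof (rule ccontr)
      assume lam1: "lam 1 \<noteq> 0"
      obtain \<phi> where \<phi>: "\<And>i. i \<in> {1, 2, 3, 4} \<Longrightarrow> lam i *\<^sub>R g i = (-1) ^ i *\<^sub>R \<phi>"
        using dual_tensor_vertices_dependence[OF sum] by blast
      have "(-1) ^ j * (-1) ^ j = (1 :: real)"
        by (simp flip: power_mult_distrib)
      then have "\<phi> = ((-1) ^ j * lam j) *\<^sub>R g j"
        using \<phi>[OF j(1)] by (metis scaleR_scaleR scaleR_one)
      define r where "r = - ((-1) ^ j * lam j) / lam 1"
      have "lam 1 *\<^sub>R g 1 = lam 1 *\<^sub>R (r *\<^sub>R g j)"
        using \<phi>[of 1] \<open>\<phi> = _\<close> lam1 by (simp add: r_def)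
      then have "g 1 = r *\<^sub>R g j"
        using lam1 by (metis scaleR_cancel_left)
      then have y1: "y 1 = r *\<^sub>R y j"
        by (rule strictly_convex_J_scaleR_eq[OF sc unit[OF one] unit[OF j(1)] g[OF one] g[OF j(1)]])
      then have "r \<noteq> 0"
        using unit[OF one] by auto
      then have "y j = (1 / r) *\<^sub>R y 1"
        using y1 by simp
      then have "y j \<in> span {y 1}"
        by (metis real_vector.span_base real_vector.span_scale singletonI)
      then show False
        using j(2) by blast
    qed
    then show "\<forall>i\<in>{1, 2, 3, 4}. lam i = 0"
      using dual_tensor_vertices_independent_if_coeff_zero[OF sum g0] by blast
  qed simp
  then show ?thesis
    by simp
qed

lemma rank_le_one_if_vertex_images_in_span:
  fixes T :: "linf3 \<Rightarrow>\<^sub>L 'b::real_normed_vector"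
  assumes "\<And>i. i \<in> {1, 2, 3} \<Longrightarrow> T (vertex i) \<in> span {v}"
  shows "rank T \<le> 1"
proof -
  have "range (blinfun_apply T) \<subseteq> span {v}"
  proof clarify
    fix x
    have "T x = ((c1 x + c3 x) / 2) *\<^sub>R T (vertex 1) + ((c2 x - c1 x) / 2) *\<^sub>R T (vertex 2)
        + ((c3 x - c2 x) / 2) *\<^sub>R T (vertex 3)"
      by (subst linf3_eq_vertex_combination) (simp add: blinfun.add_right blinfun.scaleR_right)
    then show "T x \<in> span {v}"
      using assms by (simp add: real_vector.span_add real_vector.span_scale)
  qed
  then have "dim (range (blinfun_apply T)) \<le> card {v}"
    by (rule real_vector.dim_le_card) simp
  then show ?thesis
    by (simp add: rank_def)
qed

lemma rank_one_imp_in_span: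
  fixes T :: "'a::real_normed_vector \<Rightarrow>\<^sub>L 'b::real_normed_vector"
  assumes "rank T = 1" and "T u \<noteq> 0"
  shows "T x \<in> span {T u}"
proof (rule ccontr)
  assume out: "T x \<notin> span {T u}"
  then have "independent {T x, T u}"
    using assms(2) by (intro real_vector.independent_insertI)
      (auto simp: real_vector.independent_insert real_vector.independent_empty)
  moreover have "T x \<noteq> T u"
    using out real_vector.span_base[of "T u" "{T u}"] by auto
  ultimately show False
    using card_le_dim_if_independent[of "{T x, T u}" "range (blinfun_apply T)"] assms(1)
    by (simp add: rank_def)
qed

theorem corollary3p10:
  fixes T :: "linf3 \<Rightarrow>\<^sub>L 'b::real_normed_vector"
  assumes dimY: "real_vector.dim (UNIV :: 'b set) = 2"
    and sc: "strictly_convex_space TYPE('b)"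
    and sm: "smooth_space TYPE('b)"
    and nT: "norm T = 1"
    and MT: "M T \<inter> Ext ball_X =
      {L3 1 1 1, - L3 1 1 1, L3 (-1) 1 1, - L3 (-1) 1 1,
       L3 (-1) (-1) 1, - L3 (-1) (-1) 1, L3 1 (-1) 1, - L3 1 (-1) 1}"
  shows "(rank T = 1 \<longrightarrow> k_smooth T 3) \<and> (rank T = 2 \<longrightarrow> k_smooth T 4)"
proof -
  define g where "g i = (SOME f. f \<in> J (T (vertex i)))" for i
  have M: "vertex i \<in> M T" if "i \<in> {1, 2, 3, 4}" for i
  proof -
    have "vertex i \<in> M T \<inter> Ext ball_X"
      unfolding MT using that by (auto simp: vertex_simps)
    then show ?thesis
      by blast
  qed
  then have unit: "norm (T (vertex i)) = 1" if "i \<in> {1, 2, 3, 4}" for i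
    using that nT by (simp add: M_def)
  have gJ: "g i \<in> J (T (vertex i))" if "i \<in> {1, 2, 3, 4}" for i
    using sm unit[OF that] unfolding g_def smooth_space_def by (metis someI_ex)
  have span: "span (J T) = span ((\<lambda>i. dual_tensor (g i) (vertex i)) ` {1, 2, 3, 4})"
    by (rule span_J_eq_span_dual_tensors[OF dimY sm nT M gJ])
  show ?thesis
  proof (cases "\<forall>i\<in>{1, 2, 3, 4}. T (vertex i) \<in> span {T (vertex 1)}")
    case True
    then have "rank T \<le> 1"
      by (intro rank_le_one_if_vertex_images_in_span) auto
    moreover have "dim (span (J T)) = 3"
      unfolding span using True by (intro dim_span_dual_tensors_parallel[OF sm unit gJ]) auto
    ultimately show ?thesis
      using nT by (simp add: k_smooth_def)
  next
    case False
    then obtain j where j: "j \<in> {1, 2, 3, 4}" "T (vertex j) \<notin> span {T (vertex 1)}"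
      by blast
    have "T (vertex 1) \<noteq> 0"
      using unit[of 1] by auto
    then have "rank T \<noteq> 1"
      using rank_one_imp_in_span[of T "vertex 1" "vertex j"] j(2) by blast
    moreover have "dim (span (J T)) = 4"
      unfolding span by (rule dim_span_dual_tensors_nonparallel[OF sc unit gJ j])
    ultimately show ?thesis
      using nT by (simp add: k_smooth_def)
  qed
qed

end
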